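(* Let $a\in\mathbb{D}$ and $\mathcal{T}\in\{\mathbb{T},\{a\}\}$. For each pair of distinct points $x_1,x_2\in X_{\mathcal{T}}=\mathcal{T}\times\partial\widehat{H^\infty}\times\mathbb{T}$ there exists $\tilde f\in B_{\mathcal{T}}$ such that $\tilde f(x_1)\neq\tilde f(x_2)$.
   Context: $\mathbb{D}$ is the open unit disc and $\mathbb{T}$ the unit circle. $H^\infty$ is the Banach algebra of bounded analytic functions on $\mathbb{D}$ with the supremum norm, $\mathcal{M}$ its maximal ideal space with the Gelfand (weak* ) topology, $\hat v$ the Gelfand transform of $v\in H^\infty$, $\widehat{H^\infty}=\{\hat v: v\in H^\infty\}\subset C(\mathcal{M})$, and $\partial\widehat{H^\infty}$ its Shilov boundary. $\mathcal{S}^\infty=\{f\in H(\mathbb{D}): f'\in H^\infty\}$; every $f\in\mathcal{S}^\infty$ extends continuously to the closed disc $\overline{\mathbb{D}}$, and $\hat f$ denotes this extension. For $\mathcal{T}\in\{\mathbb{T},\{a\}\}$, $X_{\mathcal{T}}=\mathcal{T}\times\partial\widehat{H^\infty}\times\mathbb{T}$ with the product topology, and for $f\in\mathcal{S}^\infty$, $\tilde f(z,\eta,w)=\hat f(z)+\widehat{f'}(\eta)\,w$ for $(z,\eta,w)\in X_{\mathcal{T}}$. $B_{\mathcal{T}}=\{\tilde f: f\in\mathcal{S}^\infty\}\subset C(X_{\mathcal{T}})$. *)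

theory Defs
  imports "HOL-Analysis.Analysis"
begin

text \<open>Elements of H^infinity are represented canonically as functions that are
holomorphic and bounded on the open unit disc and vanish outside it.\<close>

definition restr_disc :: "(complex \<Rightarrow> complex) \<Rightarrow> complex \<Rightarrow> complex" where
  "restr_disc v = (\<lambda>z. if z \<in> ball 0 1 then v z else 0)"

definition Hinf :: "(complex \<Rightarrow> complex) set" where
  "Hinf = {v. v holomorphic_on ball 0 1 \<and> bounded (v ` ball 0 1) \<and> (\<forall>z. z \<notin> ball 0 1 \<longrightarrow> v z = 0)}"

definition one_Hinf :: "complex \<Rightarrow> complex" where
  "one_Hinf = restr_disc (\<lambda>_. 1)"

text \<open>Maximal ideal space: nonzero multiplicative linear functionals (characters) on H^infinity,
extended by 0 off Hinf so that they are canonical points of the function space.\<close>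

definition MIS :: "((complex \<Rightarrow> complex) \<Rightarrow> complex) set" where
  "MIS = {\<phi>. (\<forall>v\<in>Hinf. \<forall>w\<in>Hinf. \<phi> (\<lambda>z. v z + w z) = \<phi> v + \<phi> w)
           \<and> (\<forall>v\<in>Hinf. \<forall>c. \<phi> (\<lambda>z. c * v z) = c * \<phi> v)
           \<and> (\<forall>v\<in>Hinf. \<forall>w\<in>Hinf. \<phi> (\<lambda>z. v z * w z) = \<phi> v * \<phi> w)
           \<and> \<phi> one_Hinf = 1
           \<and> (\<forall>v. v \<notin> Hinf \<longrightarrow> \<phi> v = 0)}"

text \<open>Gelfand topology = weak* topology = topology of pointwise convergence, i.e. the
subspace topology of MIS in the product topology on functions.\<close>

definition gelfand_topology :: "((complex \<Rightarrow> complex) \<Rightarrow> complex) topology" where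
  "gelfand_topology = top_of_set MIS"

definition closed_boundary :: "((complex \<Rightarrow> complex) \<Rightarrow> complex) set \<Rightarrow> bool" where
  "closed_boundary E \<longleftrightarrow> E \<subseteq> MIS \<and> closedin gelfand_topology E \<and>
     (\<forall>v\<in>Hinf. \<forall>\<phi>\<in>MIS. \<exists>\<psi>\<in>E. norm (\<phi> v) \<le> norm (\<psi> v))"

definition shilov_boundary :: "((complex \<Rightarrow> complex) \<Rightarrow> complex) set" where
  "shilov_boundary = \<Inter> {E. closed_boundary E}"

definition S_inf :: "(complex \<Rightarrow> complex) set" where
  "S_inf = {f. f holomorphic_on ball 0 1 \<and> bounded (deriv f ` ball 0 1)}"

definition disc_ext :: "(complex \<Rightarrow> complex) \<Rightarrow> complex \<Rightarrow> complex" where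
  "disc_ext f z = (if z \<in> ball 0 1 then f z else Lim (at z within ball 0 1) f)"

definition X_space :: "complex set \<Rightarrow> (complex \<times> ((complex \<Rightarrow> complex) \<Rightarrow> complex) \<times> complex) set" where
  "X_space T = T \<times> shilov_boundary \<times> sphere 0 1"

definition tilde :: "(complex \<Rightarrow> complex) \<Rightarrow> complex \<times> ((complex \<Rightarrow> complex) \<Rightarrow> complex) \<times> complex \<Rightarrow> complex" where
  "tilde f x = (case x of (z, \<eta>, w) \<Rightarrow> disc_ext f z + \<eta> (restr_disc (deriv f)) * w)"

end

theory Submission
  imports Defs "HOL-Complex_Analysis.Complex_Analysis"
begin

text \<open>Polynomials already separate the points. Evaluated at \<open>(z, \<eta>, w)\<close>, a polynomial \<open>Q\<close>
gives \<open>Q z + Q' p * w\<close> with \<open>p = \<eta>(id)\<close>, since characters commute with polynomial calculus.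
If the base points differ, a polynomial with double roots at the two values \<open>p\<close>, \<open>q\<close> and a
simple root at one base point separates them, unless \<open>{p, q}\<close> is the set of the two base
points, where \<open>(X - z1)^2 (X - z2)\<close> does. If the base points agree, \<open>Q = X\<close> forces equal
\<open>w\<close>, and the primitives in \<open>S_inf\<close> of arbitrary \<open>v \<in> Hinf\<close> then force \<open>\<eta>1 v = \<eta>2 v\<close>.\<close>

lemma poly_pderiv_at_double_root:
  fixes c :: "'a::idom"
  shows "poly (pderiv ([:-c, 1:]^2 * R)) c = 0"
proof -
  have "poly [:-c, 1:] c = 0" by simp
  then show ?thesis
    by (simp only: power2_eq_square mult.assoc pderiv_mult poly_add poly_mult mult_zero_left
        mult_zero_right add_0)
qed

lemma poly_separating_jets_off_critical:
  fixes z1 z2 p q w1 w2 :: "'a::idom"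
  assumes "z1 \<noteq> z2" "z1 \<noteq> p" "z1 \<noteq> q"
  shows "\<exists>Q. poly Q z1 + poly (pderiv Q) p * w1 \<noteq> poly Q z2 + poly (pderiv Q) q * w2"
proof
  let ?Q = "[:-p, 1:]^2 * ([:-q, 1:]^2 * [:-z2, 1:])"
  have swap: "?Q = [:-q, 1:]^2 * ([:-p, 1:]^2 * [:-z2, 1:])"
    by (simp only: ac_simps)
  have "poly (pderiv ?Q) p = 0"
    by (rule poly_pderiv_at_double_root)
  moreover have "poly (pderiv ?Q) q = 0"
    unfolding swap by (rule poly_pderiv_at_double_root)
  ultimately show "poly ?Q z1 + poly (pderiv ?Q) p * w1 \<noteq> poly ?Q z2 + poly (pderiv ?Q) q * w2"
    using assms by simp
qed

lemma poly_separating_jets: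
  fixes z1 z2 p q w1 w2 :: "'a::idom"
  assumes "z1 \<noteq> z2" "w1 \<noteq> 0" "w2 \<noteq> 0"
  shows "\<exists>Q. poly Q z1 + poly (pderiv Q) p * w1 \<noteq> poly Q z2 + poly (pderiv Q) q * w2"
proof -
  consider "z1 \<notin> {p, q}" | "z2 \<notin> {p, q}" | "p = z1 \<and> q = z2 \<or> p = z2 \<and> q = z1"
    using assms(1) by blast
  then show ?thesis
  proof cases
    case 1
    then show ?thesis using poly_separating_jets_off_critical assms(1) by blast
  next
    case 2
    then show ?thesis
      using poly_separating_jets_off_critical[of z2 z1 q p w2 w1] assms(1) by (auto simp: eq_commute)
  next
    case 3
    let ?Q = "[:-z1, 1:]^2 * [:-z2, 1:]"
    have "poly (pderiv ?Q) z1 = 0"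
      by (rule poly_pderiv_at_double_root)
    moreover have "poly (pderiv ?Q) z2 = (z2 - z1)^2"
      by (simp add: pderiv_mult power2_eq_square pderiv_pCons) (simp add: algebra_simps)
    ultimately show ?thesis
      using 3 assms by (intro exI[of _ ?Q]) auto
  qed
qed

lemma restr_disc_poly_in_Hinf: "restr_disc (poly P) \<in> Hinf"
proof -
  have "restr_disc (poly P) holomorphic_on ball 0 1"
    by (rule holomorphic_transform[of "poly P"]) (auto simp: restr_disc_def intro: holomorphic_intros)
  moreover have "bounded (poly P ` cball 0 1)"
    by (intro compact_imp_bounded compact_continuous_image) (auto intro: continuous_intros)
  then have "bounded (restr_disc (poly P) ` ball 0 1)"
    by (rule bounded_subset) (auto simp: restr_disc_def)
  ultimately show ?thesis
    by (auto simp: Hinf_def restr_disc_def)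
qed

lemma one_Hinf_in_Hinf: "one_Hinf \<in> Hinf"
proof -
  have "one_Hinf = restr_disc (poly [:1:])"
    by (auto simp: one_Hinf_def restr_disc_def)
  then show ?thesis
    by (metis restr_disc_poly_in_Hinf)
qed

lemma MIS_apply_restr_disc_poly:
  assumes "\<eta> \<in> MIS"
  shows "\<eta> (restr_disc (poly P)) = poly P (\<eta> (restr_disc (\<lambda>z. z)))"
proof (induction P)
  case 0
  have "\<eta> (\<lambda>z. 0 * one_Hinf z) = 0 * \<eta> one_Hinf"
    using assms one_Hinf_in_Hinf unfolding MIS_def by blast
  moreover have "restr_disc (poly 0) = (\<lambda>z. 0 * one_Hinf z)"
    by (rule ext) (simp add: restr_disc_def)
  ultimately show ?case
    by (metis mult_zero_left poly_0)
next
  case (pCons c P)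
  let ?const = "\<lambda>z. c * one_Hinf z" and ?id = "restr_disc (\<lambda>z. z)"
  let ?shift = "\<lambda>z. ?id z * restr_disc (poly P) z"
  have "?const = restr_disc (poly [:c:])" "?id = restr_disc (poly [:0, 1:])"
    "?shift = restr_disc (poly ([:0, 1:] * P))"
    by (auto simp: one_Hinf_def restr_disc_def)
  then have "?const \<in> Hinf" "?id \<in> Hinf" "?shift \<in> Hinf"
    by (metis restr_disc_poly_in_Hinf)+
  moreover have pCons_split: "restr_disc (poly (pCons c P)) = (\<lambda>z. ?const z + ?shift z)"
    by (auto simp: restr_disc_def one_Hinf_def)
  ultimately show ?case
    unfolding pCons_split using assms pCons one_Hinf_in_Hinf restr_disc_poly_in_Hinf[of P]
    by (simp add: MIS_def)
qed

lemma deriv_poly: "deriv (poly Q) = poly (pderiv Q)"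
  by (rule ext, rule DERIV_imp_deriv, rule poly_DERIV)

lemma poly_in_S_inf: "poly Q \<in> S_inf"
proof -
  have "bounded (poly (pderiv Q) ` cball 0 1)"
    by (intro compact_imp_bounded compact_continuous_image) (auto intro: continuous_intros)
  then have "bounded (poly (pderiv Q) ` ball 0 1)"
    by (rule bounded_subset) auto
  then show ?thesis
    by (auto simp: S_inf_def deriv_poly intro: holomorphic_intros)
qed

lemma disc_ext_poly:
  assumes "z \<in> cball 0 1"
  shows "disc_ext (poly Q) z = poly Q z"
proof (cases "z \<in> ball 0 1")
  case False
  have "\<not> trivial_limit (at z within ball 0 1)"
    using assms by (simp add: trivial_limit_within islimpt_ball)
  moreover have "(poly Q \<longlongrightarrow> poly Q z) (at z within ball 0 1)"
    by (intro tendsto_within_subset[OF isCont_tendsto_compose[OF poly_isCont]]) auto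
  ultimately show ?thesis
    using False by (simp add: disc_ext_def tendsto_Lim)
qed (simp add: disc_ext_def)

lemma tilde_poly:
  assumes "z \<in> cball 0 1" "\<eta> \<in> MIS"
  shows "tilde (poly Q) (z, \<eta>, w) = poly Q z + poly (pderiv Q) (\<eta> (restr_disc (\<lambda>z. z))) * w"
  using assms by (simp add: tilde_def disc_ext_poly deriv_poly MIS_apply_restr_disc_poly)

lemma Hinf_has_primitive_in_S_inf:
  assumes "v \<in> Hinf"
  obtains F where "F \<in> S_inf" "restr_disc (deriv F) = v"
proof -
  have "v holomorphic_on ball 0 1"
    using assms by (simp add: Hinf_def)
  then obtain F where "\<And>z. z \<in> ball 0 1 \<Longrightarrow> (F has_field_derivative v z) (at z within ball 0 1)"
    using holomorphic_convex_primitive'[OF convex_ball open_ball] by blast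
  then have F': "(F has_field_derivative v z) (at z)" if "z \<in> ball 0 1" for z
    using that at_within_open[OF that open_ball] by metis
  then have "F holomorphic_on ball 0 1"
    using holomorphic_on_open open_ball by blast
  moreover have deriv_F: "deriv F z = v z" if "z \<in> ball 0 1" for z
    using F'[OF that] by (rule DERIV_imp_deriv)
  moreover have "bounded (deriv F ` ball 0 1)"
    using assms deriv_F by (simp add: Hinf_def)
  ultimately have "F \<in> S_inf"
    by (simp add: S_inf_def)
  moreover have "restr_disc (deriv F) = v"
    using deriv_F assms by (auto simp: restr_disc_def Hinf_def)
  ultimately show thesis
    using that by blast
qed

lemma shilov_boundary_subset_MIS: "shilov_boundary \<subseteq> MIS"
proof -
  have "closed_boundary MIS"
    unfolding closed_boundary_def gelfand_topology_def by auto
  then show ?thesis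
    unfolding shilov_boundary_def by blast
qed

lemma S_inf_separates_points:
  assumes "z1 \<in> cball 0 1" "\<eta>1 \<in> MIS" "w1 \<noteq> 0"
    and "z2 \<in> cball 0 1" "\<eta>2 \<in> MIS" "w2 \<noteq> 0"
    and agree: "\<And>f. f \<in> S_inf \<Longrightarrow> tilde f (z1, \<eta>1, w1) = tilde f (z2, \<eta>2, w2)"
  shows "(z1, \<eta>1, w1) = (z2, \<eta>2, w2)"
proof -
  define p q where "p = \<eta>1 (restr_disc (\<lambda>z. z))" and "q = \<eta>2 (restr_disc (\<lambda>z. z))"
  have jets: "poly Q z1 + poly (pderiv Q) p * w1 = poly Q z2 + poly (pderiv Q) q * w2" for Q
    using agree[OF poly_in_S_inf] assms by (simp add: tilde_poly p_def q_def)
  then have "z1 = z2"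
    using poly_separating_jets assms by blast
  moreover from this have "w1 = w2"
    using jets[of "[:0, 1:]"] by (simp add: pderiv_pCons)
  moreover have "\<eta>1 v = \<eta>2 v" for v
  proof (cases "v \<in> Hinf")
    case True
    then obtain F where "F \<in> S_inf" "restr_disc (deriv F) = v"
      by (rule Hinf_has_primitive_in_S_inf)
    then show ?thesis
      using agree[of F] \<open>z1 = z2\<close> \<open>w1 = w2\<close> assms by (simp add: tilde_def)
  next
    case False
    then show ?thesis
      using assms by (simp add: MIS_def)
  qed
  ultimately show ?thesis
    by auto
qed

theorem proposition2p1:
  fixes a :: complex and T :: "complex set"
  assumes "a \<in> ball 0 1"
    and "T \<in> {sphere 0 1, {a}}"
  shows "\<forall>x1\<in>X_space T. \<forall>x2\<in>X_space T. x1 \<noteq> x2 \<longrightarrow>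
           (\<exists>f\<in>S_inf. tilde f x1 \<noteq> tilde f x2)"
proof (intro ballI impI)
  fix x1 x2
  assume x1: "x1 \<in> X_space T" and x2: "x2 \<in> X_space T" and "x1 \<noteq> x2"
  have X: "X_space T \<subseteq> cball 0 1 \<times> MIS \<times> - {0}"
    using assms shilov_boundary_subset_MIS by (auto simp: X_space_def)
  obtain z1 \<eta>1 w1 where "x1 = (z1, \<eta>1, w1)" "z1 \<in> cball 0 1" "\<eta>1 \<in> MIS" "w1 \<noteq> 0"
    using x1 X by blast
  moreover obtain z2 \<eta>2 w2 where "x2 = (z2, \<eta>2, w2)" "z2 \<in> cball 0 1" "\<eta>2 \<in> MIS" "w2 \<noteq> 0"
    using x2 X by blast
  ultimately show "\<exists>f\<in>S_inf. tilde f x1 \<noteq> tilde f x2"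
    using S_inf_separates_points \<open>x1 \<noteq> x2\<close> by blast
qed

end
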